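(* Let $\boldsymbol z_f$ and $\boldsymbol z_g$ be random periodic features associated with functions $f,g \in \mathrm{PF}$, frequencies $\boldsymbol\omega_j \overset{\text{iid}}{\sim} \Lambda = \mathcal F K$ and dithers $\xi_j \overset{\text{iid}}{\sim} \mathcal U([0,2\pi))$. For any pair $\boldsymbol x,\boldsymbol y \in \mathbb R^d$, the expected kernel $\kappa_{f,g}(\boldsymbol x,\boldsymbol y) := \mathbb E_{\boldsymbol\Omega,\boldsymbol\xi} \langle \boldsymbol z_f(\boldsymbol x),\boldsymbol z_g(\boldsymbol y)\rangle$ satisfies $$\kappa_{f,g}(\boldsymbol x,\boldsymbol y) = \sum_{k \in \mathbb Z} F_k G_k^* \, K\big(k(\boldsymbol x-\boldsymbol y)\big) =: K_{f,g}(\boldsymbol x-\boldsymbol y).$$ Although expanded as an infinite series, this kernel is bounded, $|\kappa_{f,g}| \leq 1$, since $f,g \in \mathrm{PF}$.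
   Context: $\mathrm{PF} := \{ f:\mathbb R\to\mathbb C \mid f \text{ is } 2\pi\text{-periodic}, \int_0^{2\pi} f(t)\,dt = 0, \|f\|_\infty \le 1\}$. For $f\in\mathrm{PF}$, $f(t)=\sum_{k\in\mathbb Z} F_k e^{\mathrm i k t}$ with $F_k = \frac{1}{2\pi}\int_0^{2\pi} f(t) e^{-\mathrm i k t}dt$ (similarly $G_k$ for $g$). Random periodic features: $\boldsymbol z_f(\boldsymbol x) := \frac{1}{\sqrt m} f(\boldsymbol\Omega^\top \boldsymbol x + \boldsymbol\xi) \in \mathbb C^m$ (applied componentwise), with $\boldsymbol\Omega = (\boldsymbol\omega_1,\dots,\boldsymbol\omega_m) \in \mathbb R^{d\times m}$, $\boldsymbol\omega_j$ iid from a probability distribution $\Lambda$ on $\mathbb R^d$, and $\boldsymbol\xi$ with iid $\mathcal U([0,2\pi))$ entries; the same $\boldsymbol\Omega,\boldsymbol\xi$ are used for $\boldsymbol z_f$ and $\boldsymbol z_g$. $K:\mathbb R^d\to\mathbb C$ is the shift-invariant kernel function $K(\boldsymbol u) = (\mathcal F^{-1}\Lambda)(\boldsymbol u) = \int_{\mathbb R^d} e^{\mathrm i \boldsymbol\omega^\top \boldsymbol u}\,d\Lambda(\boldsymbol\omega)$, so $K(\boldsymbol 0)=1$. The inner product is $\langle \boldsymbol a,\boldsymbol b\rangle = \sum_j a_j b_j^*$. *)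

theory Defs
  imports "HOL-Probability.Probability"
begin

definition PF :: "(real \<Rightarrow> complex) set" where
  "PF = {f. f \<in> borel_measurable borel \<and>
            (\<forall>t. f (t + 2 * pi) = f t) \<and>
            (LBINT t=0..2*pi. f t) = 0 \<and>
            (\<forall>t. norm (f t) \<le> 1)}"

definition fourier_coeff :: "(real \<Rightarrow> complex) \<Rightarrow> int \<Rightarrow> complex" where
  "fourier_coeff f k = (LBINT t=0..2*pi. f t * cis (- (of_int k * t))) / (2 * pi)"

definition kernel_of :: "'a::euclidean_space measure \<Rightarrow> 'a \<Rightarrow> complex" where
  "kernel_of \<Lambda> u = (LINT \<omega>|\<Lambda>. cis (\<omega> \<bullet> u))"

definition freq_dither :: "'a::euclidean_space measure \<Rightarrow> ('a \<times> real) measure" where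
  "freq_dither \<Lambda> = \<Lambda> \<Otimes>\<^sub>M uniform_measure lborel {0..<2*pi}"

definition rpf :: "nat \<Rightarrow> (real \<Rightarrow> complex) \<Rightarrow> (nat \<Rightarrow> 'a::euclidean_space \<times> real) \<Rightarrow> 'a \<Rightarrow> nat \<Rightarrow> complex" where
  "rpf m f p x j = f (fst (p j) \<bullet> x + snd (p j)) / of_real (sqrt (real m))"

definition expected_kernel :: "nat \<Rightarrow> 'a::euclidean_space measure \<Rightarrow> (real \<Rightarrow> complex) \<Rightarrow> (real \<Rightarrow> complex) \<Rightarrow> 'a \<Rightarrow> 'a \<Rightarrow> complex" where
  "expected_kernel m \<Lambda> f g x y =
     (LINT p|PiM {..<m} (\<lambda>_. freq_dither \<Lambda>).
        (\<Sum>j<m. rpf m f p x j * cnj (rpf m g p y j)))"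

end

theory Submission
  imports Defs
begin

(*
  Averaging over a single frequency-dither pair, and then over the dither, turns the expected
  kernel into the integral against \<Lambda> of the cross-correlation
  c(u) = (1/2\<pi>) \<integral> f(t + u) conj(g(t)) dt  at  u = \<omega> \<bullet> (x - y);
  as |f|, |g| \<le> 1 we get |c| \<le> 1, hence the bound on the kernel.

  The Fourier coefficients of f(\<cdot> + u) are e^(iku) F_k, so the error of the partial sum
  \<Sum>_{k \<in> S} F_k conj(G_k) e^(iku) is the inner product of g with f(\<cdot> + u) minus its projection on
  the frequencies in S.  By Cauchy-Schwarz it is at most the Bessel defect
  \<parallel>f\<parallel>\<^sup>2 - \<Sum>_{k \<in> S} |F_k|\<^sup>2, which does not depend on u and tends to 0 by Parseval's theorem.  The
  partial sums therefore converge uniformly in u and can be integrated term by term against \<Lambda>,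
  which turns e^(ik \<omega> \<bullet> (x - y)) into K(k(x - y)).

  Parseval's theorem rests on the density of trigonometric polynomials in L\<^sup>2 of one period:
  bounded Borel functions are bounded pointwise limits of simple functions; an indicator is
  approximated by a continuous function of e^(it) through outer regularity of Lebesgue measure
  and Urysohn's lemma on the circle; and continuous functions on the circle are uniform limits of
  trigonometric polynomials by Stone-Weierstrass.
*)

lemma borel_measurable_cis [measurable]: "cis \<in> borel_measurable borel"
  by (intro borel_measurable_continuous_onI continuous_intros)

lemma borel_measurable_cnj [measurable]: "cnj \<in> borel_measurable borel"
  by (intro borel_measurable_continuous_onI continuous_intros)

lemma (in prob_space) norm_integral_le_const:
  fixes f :: "'a \<Rightarrow> 'b::{banach, second_countable_topology}"
  assumes "integrable M f" "\<And>x. x \<in> space M \<Longrightarrow> norm (f x) \<le> B"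
  shows "norm (integral\<^sup>L M f) \<le> B"
proof -
  have "norm (integral\<^sup>L M f) \<le> (LINT x|M. norm (f x))"
    by (rule integral_norm_bound)
  also have "\<dots> \<le> (LINT x|M. B)"
    using assms by (intro integral_mono integrable_norm) auto
  finally show ?thesis
    by (simp add: prob_space)
qed

section \<open>The normalised Lebesgue measure on one period\<close>

definition circle_measure :: "real measure" where
  "circle_measure = uniform_measure lborel {0..<2*pi}"

lemma prob_space_circle_measure: "prob_space circle_measure"
  unfolding circle_measure_def by (rule prob_space_uniform_measure) auto

lemma sets_circle_measure [simp, measurable_cong]: "sets circle_measure = sets borel"
  and space_circle_measure [simp]: "space circle_measure = UNIV"
  unfolding circle_measure_def by auto

lemma integrable_circle_measure:
  fixes h :: "real \<Rightarrow> 'b::{banach, second_countable_topology}"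
  assumes "h \<in> borel_measurable borel" "\<And>t. norm (h t) \<le> B"
  shows "integrable circle_measure h"
  using assms
  by (intro finite_measure.integrable_const_bound[where B = B] prob_space.finite_measure
        prob_space_circle_measure) auto

lemma integral_circle_measure:
  fixes h :: "real \<Rightarrow> complex"
  assumes [measurable]: "h \<in> borel_measurable borel"
  shows "integral\<^sup>L circle_measure h = (LBINT t=0..2*pi. h t) / (2*pi)"
proof -
  have density: "circle_measure = density lborel (\<lambda>t. ennreal (indicator {0..<2*pi} t / (2*pi)))"
    unfolding circle_measure_def uniform_measure_def
    by (intro density_cong) (auto simp: divide_ennreal[symmetric] split: split_indicator)
  have "integral\<^sup>L circle_measure h = LINT t|lborel. (indicator {0..<2*pi} t / (2*pi)) *\<^sub>R h t"
    unfolding density by (rule integral_density) auto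
  also have "\<dots> = (LINT t|lborel. indicator {0..<2*pi} t *\<^sub>R h t) / (2*pi)"
    by (simp add: scaleR_conv_of_real divide_simps mult_ac)
  also have "\<dots> = (LBINT t=0..2*pi. h t) / (2*pi)"
    using interval_integral_Ico[of 0 "2*pi" h] by (simp add: set_lebesgue_integral_def zero_ereal_def)
  finally show ?thesis .
qed

lemma fourier_coeff_circle_measure:
  assumes [measurable]: "h \<in> borel_measurable borel"
  shows "fourier_coeff h k = (LINT t|circle_measure. h t * cis (- (of_int k * t)))"
  by (simp add: integral_circle_measure fourier_coeff_def)

lemma integral_circle_measure_cis:
  "(LINT t|circle_measure. cis (of_int n * t)) = (if n = 0 then 1 else 0)"
proof (cases "n = 0")
  case True
  then show ?thesis
    using prob_space.prob_space[OF prob_space_circle_measure] by simp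
next
  case False
  define F where "F t = cis (of_int n * t) / (\<i> * of_int n)" for t
  have "(F has_vector_derivative cis (of_int n * t)) (at t within X)" for t X
    unfolding F_def has_vector_derivative_def
    using False by (auto intro!: derivative_eq_intros ext simp: scaleR_conv_of_real field_simps)
  then have "(LBINT t=0..2*pi. cis (of_int n * t)) = F (2*pi) - F 0"
    using interval_integral_FTC_finite[of 0 "2*pi" "\<lambda>t. cis (of_int n * t)" F]
    by (simp add: zero_ereal_def continuous_on_cis continuous_intros)
  also have "\<dots> = 0"
    unfolding F_def using cis_multiple_2pi[of "of_int n"] by (simp add: mult_ac)
  finally show ?thesis
    using False by (simp add: integral_circle_measure)
qed

lemma AE_circle_measure_in_open_period: "AE t in circle_measure. t \<in> {0<..<2*pi}"
  unfolding circle_measure_def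
  by (rule AE_uniform_measureI) (auto intro: eventually_mono[OF AE_lborel_singleton[of 0]])

definition bounded_borel :: "(real \<Rightarrow> complex) \<Rightarrow> bool" where
  "bounded_borel h \<longleftrightarrow> h \<in> borel_measurable borel \<and> (\<exists>B. \<forall>t. cmod (h t) \<le> B)"

lemma bounded_borel_const: "bounded_borel (\<lambda>t. a)"
  unfolding bounded_borel_def by auto

lemma bounded_borel_cis: "bounded_borel (\<lambda>t. cis (a * t))"
  and bounded_borel_cis_minus: "bounded_borel (\<lambda>t. cis (- (a * t)))"
  unfolding bounded_borel_def by auto

lemma bounded_borel_indicator: "A \<in> sets borel \<Longrightarrow> bounded_borel (\<lambda>t. indicator A t)"
  unfolding bounded_borel_def by (auto intro!: exI[of _ 1] simp: indicator_def)

lemma bounded_borel_cnj: "bounded_borel u \<Longrightarrow> bounded_borel (\<lambda>t. cnj (u t))"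
  unfolding bounded_borel_def by auto

lemma bounded_borel_translate: "bounded_borel u \<Longrightarrow> bounded_borel (\<lambda>t. u (t + a))"
  unfolding bounded_borel_def by auto

lemma bounded_borel_add:
  assumes "bounded_borel u" "bounded_borel v"
  shows "bounded_borel (\<lambda>t. u t + v t)"
proof -
  obtain B C where [measurable]: "u \<in> borel_measurable borel" "v \<in> borel_measurable borel"
    and "\<And>t. cmod (u t) \<le> B" "\<And>t. cmod (v t) \<le> C"
    using assms unfolding bounded_borel_def by blast
  then have "cmod (u t + v t) \<le> B + C" for t
    by (meson add_mono norm_triangle_le)
  moreover have "(\<lambda>t. u t + v t) \<in> borel_measurable borel"
    by measurable
  ultimately show ?thesis
    unfolding bounded_borel_def by blast
qed

lemma bounded_borel_mult:
  assumes "bounded_borel u" "bounded_borel v"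
  shows "bounded_borel (\<lambda>t. u t * v t)"
proof -
  obtain B C where [measurable]: "u \<in> borel_measurable borel" "v \<in> borel_measurable borel"
    and "\<And>t. cmod (u t) \<le> B" "\<And>t. cmod (v t) \<le> C"
    using assms unfolding bounded_borel_def by blast
  then have "cmod (u t * v t) \<le> B * C" for t
    unfolding norm_mult by (intro mult_mono) (auto intro: order_trans[OF norm_ge_zero])
  moreover have "(\<lambda>t. u t * v t) \<in> borel_measurable borel"
    by measurable
  ultimately show ?thesis
    unfolding bounded_borel_def by blast
qed

lemma bounded_borel_diff: "bounded_borel u \<Longrightarrow> bounded_borel v \<Longrightarrow> bounded_borel (\<lambda>t. u t - v t)"
  using bounded_borel_add[of u "\<lambda>t. (-1) * v t"] bounded_borel_mult[OF bounded_borel_const, of v "-1"]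
  by simp

lemma bounded_borel_sum:
  "finite I \<Longrightarrow> (\<And>i. i \<in> I \<Longrightarrow> bounded_borel (h i)) \<Longrightarrow> bounded_borel (\<lambda>t. \<Sum>i\<in>I. h i t)"
  by (induction I rule: finite_induct) (auto intro: bounded_borel_add bounded_borel_const[of 0, simplified])

lemma periodic_add_int_multiple:
  assumes periodic: "\<And>t. h (t + 2*pi) = h t"
  shows "h (t + 2*pi * of_int n) = h t"
proof -
  have nat_multiple: "h (t + 2*pi * of_nat m) = h t" for t m
  proof (induction m arbitrary: t)
    case (Suc m)
    have "h (t + 2*pi * of_nat (Suc m)) = h ((t + 2*pi * of_nat m) + 2*pi)"
      by (simp add: algebra_simps)
    then show ?case using periodic Suc by simp
  qed simp
  show ?thesis
  proof (cases "n \<ge> 0")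
    case True
    then show ?thesis using nat_multiple[of t "nat n"] by simp
  next
    case False
    then show ?thesis
      using nat_multiple[of "t + 2*pi * of_int n" "nat (-n)"] by (simp add: algebra_simps)
  qed
qed

lemma set_integral_lborel_translate:
  fixes h :: "real \<Rightarrow> 'b::{banach, second_countable_topology}"
  shows "(LINT t:{0..<c}|lborel. h (t + a)) = (LINT t:{a..<a+c}|lborel. h t)"
proof -
  have "(LINT t:{a..<a+c}|lborel. h t)
      = \<bar>1\<bar> *\<^sub>R (LBINT t. indicator {a..<a+c} (a + 1 * t) *\<^sub>R h (a + 1 * t))"
    unfolding set_lebesgue_integral_def by (rule lborel_integral_real_affine) simp
  also have "\<dots> = (LBINT t. indicator {0..<c} t *\<^sub>R h (t + a))"
    unfolding abs_one scaleR_one mult_1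
    by (intro Bochner_Integration.integral_cong) (auto simp: indicator_def add.commute)
  finally show ?thesis
    unfolding set_lebesgue_integral_def by simp
qed

lemma set_integrable_lborel_Ico_bounded_borel:
  "bounded_borel h \<Longrightarrow> set_integrable lborel {c..<d} h"
proof -
  assume "bounded_borel h"
  then obtain B where [measurable]: "h \<in> borel_measurable borel" and bound: "\<And>t. cmod (h t) \<le> B"
    unfolding bounded_borel_def by blast
  have "emeasure lborel {c..<d} < \<infinity>"
    by (cases "c \<le> d") (auto simp: emeasure_lborel_Ico)
  then have "integrable lborel (\<lambda>t. indicator {c..<d} t * B)"
    by (intro integrable_mult_left integrable_real_indicator) auto
  then show ?thesis
    unfolding set_integrable_def
    by (rule Bochner_Integration.integrable_bound)
       (auto intro: order_trans[OF bound abs_ge_self] simp: indicator_def)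
qed

text \<open>Cut the translated period at \<open>2\<pi>\<close> and move the overhanging piece back by one period.\<close>
lemma set_integral_period_translate:
  assumes h: "bounded_borel h" and periodic: "\<And>t. h (t + 2*pi) = h t" and b: "0 \<le> b" "b \<le> 2*pi"
  shows "(LINT t:{0..<2*pi}|lborel. h (t + b)) = (LINT t:{0..<2*pi}|lborel. h t)"
proof -
  note integrable = set_integrable_lborel_Ico_bounded_borel[OF h]
  have "(LINT t:{0..<2*pi}|lborel. h (t + b)) = (LINT t:{b..<b+2*pi}|lborel. h t)"
    by (rule set_integral_lborel_translate)
  also have "{b..<b+2*pi} = {b..<2*pi} \<union> {2*pi..<2*pi+b}"
    using b by auto
  also have "(LINT t:\<dots>|lborel. h t)
      = (LINT t:{b..<2*pi}|lborel. h t) + (LINT t:{2*pi..<2*pi+b}|lborel. h t)"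
    by (rule set_integral_Un) (auto intro: integrable)
  also have "(LINT t:{2*pi..<2*pi+b}|lborel. h t) = (LINT t:{0..<b}|lborel. h (t + 2*pi))"
    by (rule set_integral_lborel_translate[symmetric])
  also have "(LINT t:{b..<2*pi}|lborel. h t) + (LINT t:{0..<b}|lborel. h (t + 2*pi))
      = (LINT t:{0..<b} \<union> {b..<2*pi}|lborel. h t)"
    using periodic by (subst set_integral_Un) (auto intro: integrable)
  also have "{0..<b} \<union> {b..<2*pi} = {0..<2*pi}"
    using b by auto
  finally show ?thesis .
qed

lemma integral_circle_measure_translate:
  assumes h: "bounded_borel h" and periodic: "\<And>t. h (t + 2*pi) = h t"
  shows "(LINT t|circle_measure. h (t + a)) = (LINT t|circle_measure. h t)"
proof -
  have [measurable]: "h \<in> borel_measurable borel"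
    using h unfolding bounded_borel_def by blast
  define n where "n = \<lfloor>a / (2*pi)\<rfloor>"
  define b where "b = a - 2*pi * of_int n"
  have "of_int n \<le> a / (2*pi)" "a / (2*pi) < of_int n + 1"
    unfolding n_def by linarith+
  then have b: "0 \<le> b" "b \<le> 2*pi"
    unfolding b_def by (auto simp: field_simps)
  have "h (t + a) = h (t + b)" for t
    using periodic_add_int_multiple[of h, OF periodic, of "t + b" n] by (simp add: b_def)
  then show ?thesis
    using set_integral_period_translate[OF h periodic b]
      interval_integral_Ico[of 0 "2*pi" h] interval_integral_Ico[of 0 "2*pi" "\<lambda>t. h (t + b)"]
    by (simp add: integral_circle_measure zero_ereal_def)
qed

section \<open>Trigonometric polynomials\<close>

definition trig_poly :: "(real \<Rightarrow> complex) \<Rightarrow> bool" where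
  "trig_poly T \<longleftrightarrow> (\<exists>S c. finite S \<and> (\<forall>t. T t = (\<Sum>k\<in>S. c k * cis (of_int k * t))))"

lemma trig_poly_monomial: "trig_poly (\<lambda>t. a * cis (of_int k * t))"
  unfolding trig_poly_def by (intro exI[of _ "{k}"] exI[of _ "\<lambda>_. a"]) simp

lemma trig_poly_const: "trig_poly (\<lambda>t. a)"
  using trig_poly_monomial[of a 0] by simp

lemma trig_poly_add:
  assumes "trig_poly T1" "trig_poly T2"
  shows "trig_poly (\<lambda>t. T1 t + T2 t)"
proof -
  obtain S1 c1 where S1: "finite S1" "\<And>t. T1 t = (\<Sum>k\<in>S1. c1 k * cis (of_int k * t))"
    using assms(1) unfolding trig_poly_def by blast
  obtain S2 c2 where S2: "finite S2" "\<And>t. T2 t = (\<Sum>k\<in>S2. c2 k * cis (of_int k * t))"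
    using assms(2) unfolding trig_poly_def by blast
  define c where "c k = (if k \<in> S1 then c1 k else 0) + (if k \<in> S2 then c2 k else 0)" for k
  have "T1 t + T2 t = (\<Sum>k\<in>S1 \<union> S2. c k * cis (of_int k * t))" for t
  proof -
    have "(\<Sum>k\<in>S1 \<union> S2. c k * cis (of_int k * t))
        = (\<Sum>k\<in>S1 \<union> S2. if k \<in> S1 then c1 k * cis (of_int k * t) else 0)
          + (\<Sum>k\<in>S1 \<union> S2. if k \<in> S2 then c2 k * cis (of_int k * t) else 0)"
      unfolding sum.distrib[symmetric] by (rule sum.cong) (auto simp: c_def distrib_right)
    also have "\<dots> = T1 t + T2 t"
      using S1 S2 by (simp add: sum.inter_restrict[symmetric])
    finally show ?thesis ..
  qed
  then show ?thesis
    unfolding trig_poly_def using S1 S2 by blast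
qed

lemma trig_poly_sum:
  "finite I \<Longrightarrow> (\<And>i. i \<in> I \<Longrightarrow> trig_poly (T i)) \<Longrightarrow> trig_poly (\<lambda>t. \<Sum>i\<in>I. T i t)"
  by (induction I rule: finite_induct) (auto intro: trig_poly_add simp: trig_poly_const[of 0, simplified])

lemma trig_poly_mult:
  assumes "trig_poly T1" "trig_poly T2"
  shows "trig_poly (\<lambda>t. T1 t * T2 t)"
proof -
  obtain S1 c1 where S1: "finite S1" "\<And>t. T1 t = (\<Sum>k\<in>S1. c1 k * cis (of_int k * t))"
    using assms(1) unfolding trig_poly_def by blast
  obtain S2 c2 where S2: "finite S2" "\<And>t. T2 t = (\<Sum>k\<in>S2. c2 k * cis (of_int k * t))"
    using assms(2) unfolding trig_poly_def by blast
  have "T1 t * T2 t = (\<Sum>j\<in>S1. \<Sum>k\<in>S2. (c1 j * c2 k) * cis (of_int (j + k) * t))" for t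
    unfolding S1 S2 sum_product by (intro sum.cong refl) (simp add: cis_mult algebra_simps)
  moreover have "trig_poly (\<lambda>t. \<Sum>j\<in>S1. \<Sum>k\<in>S2. (c1 j * c2 k) * cis (of_int (j + k) * t))"
    using S1 S2 by (intro trig_poly_sum trig_poly_monomial) auto
  ultimately show ?thesis
    by (simp only: fun_eq_iff[symmetric])
qed

text \<open>The linear generators \<open>Re z\<close> and \<open>Im z\<close> restrict on the circle to combinations of \<open>e\<^sup>i\<^sup>t\<close>
  and \<open>e\<^sup>-\<^sup>i\<^sup>t\<close>.\<close>
lemma trig_poly_real_polynomial_function_cis:
  fixes p :: "complex \<Rightarrow> real"
  assumes "real_polynomial_function p"
  shows "trig_poly (\<lambda>t. complex_of_real (p (cis t)))"
  using assms
proof (induction p rule: real_polynomial_function.induct)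
  case (linear l)
  interpret bounded_linear l by fact
  have l_eq: "l z = Re z * l 1 + Im z * l \<i>" for z
  proof -
    have "z = Re z *\<^sub>R 1 + Im z *\<^sub>R \<i>"
      by (simp add: complex_eq_iff)
    then have "l z = l (Re z *\<^sub>R 1 + Im z *\<^sub>R \<i>)"
      by simp
    also have "\<dots> = Re z * l 1 + Im z * l \<i>"
      by (simp add: add scale)
    finally show ?thesis .
  qed
  have "complex_of_real (l (cis t))
      = (complex_of_real (l 1) - \<i> * l \<i>) / 2 * cis (of_int 1 * t)
        + (complex_of_real (l 1) + \<i> * l \<i>) / 2 * cis (of_int (-1) * t)" for t
    unfolding l_eq[of "cis t"] by (simp add: complex_eq_iff algebra_simps add_divide_distrib[symmetric])
  then show ?case
    using trig_poly_add[OF trig_poly_monomial trig_poly_monomial] by (simp only: fun_eq_iff[symmetric])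
next
  case (const c)
  then show ?case using trig_poly_const by simp
next
  case (add p q)
  then show ?case using trig_poly_add[OF add.IH] by simp
next
  case (mult p q)
  then show ?case using trig_poly_mult[OF mult.IH] by simp
qed

lemma uniform_approx_by_trig_poly:
  fixes \<psi> :: "complex \<Rightarrow> real"
  assumes "continuous_on UNIV \<psi>" "e > 0"
  obtains T where "trig_poly T" "\<And>t. cmod (complex_of_real (\<psi> (cis t)) - T t) < e"
proof -
  obtain p where p: "real_polynomial_function p" "\<And>z. z \<in> sphere 0 1 \<Longrightarrow> \<bar>\<psi> z - p z\<bar> < e"
    using Stone_Weierstrass_real_polynomial_function[of "sphere 0 1" \<psi> e] assms
    by (metis compact_sphere continuous_on_subset subset_UNIV)
  have "cmod (complex_of_real (\<psi> (cis t)) - complex_of_real (p (cis t))) < e" for t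
    using p(2)[of "cis t"] by (simp flip: of_real_diff)
  then show ?thesis
    using that trig_poly_real_polynomial_function_cis[OF p(1)] by blast
qed

lemma bounded_borel_trig_sum: "finite S \<Longrightarrow> bounded_borel (\<lambda>t. \<Sum>k\<in>S. c k * cis (of_int k * t))"
  by (intro bounded_borel_sum bounded_borel_mult bounded_borel_const bounded_borel_cis)

lemma bounded_borel_trig_poly: "trig_poly T \<Longrightarrow> bounded_borel T"
  unfolding trig_poly_def by (auto simp: fun_eq_iff[symmetric] intro: bounded_borel_trig_sum)

section \<open>The \<open>L\<^sup>2\<close> structure of one period\<close>

definition L2_inner :: "(real \<Rightarrow> complex) \<Rightarrow> (real \<Rightarrow> complex) \<Rightarrow> complex" where
  "L2_inner u v = (LINT t|circle_measure. u t * cnj (v t))"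

definition L2_norm_sq :: "(real \<Rightarrow> complex) \<Rightarrow> real" where
  "L2_norm_sq u = (LINT t|circle_measure. (cmod (u t))\<^sup>2)"

lemma integrable_bounded_borel: "bounded_borel u \<Longrightarrow> integrable circle_measure u"
  unfolding bounded_borel_def by (auto intro: integrable_circle_measure)

lemma integrable_norm_sq_bounded_borel:
  assumes "bounded_borel u"
  shows "integrable circle_measure (\<lambda>t. (cmod (u t))\<^sup>2)"
proof -
  obtain B where [measurable]: "u \<in> borel_measurable borel" and "\<And>t. cmod (u t) \<le> B"
    using assms unfolding bounded_borel_def by blast
  then have "norm ((cmod (u t))\<^sup>2) \<le> B\<^sup>2" for t
    by (simp add: power_mono)
  then show ?thesis
    by (intro integrable_circle_measure) auto
qed

lemma integrable_inner_bounded_borel: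
  "bounded_borel u \<Longrightarrow> bounded_borel v \<Longrightarrow> integrable circle_measure (\<lambda>t. u t * cnj (v t))"
  by (intro integrable_bounded_borel bounded_borel_mult bounded_borel_cnj)

lemma L2_norm_sq_nonneg: "L2_norm_sq u \<ge> 0"
  unfolding L2_norm_sq_def by (rule integral_nonneg_AE) auto

lemma L2_norm_sq_eq_inner: "complex_of_real (L2_norm_sq u) = L2_inner u u"
  unfolding L2_norm_sq_def L2_inner_def integral_complex_of_real[symmetric] complex_norm_square ..

lemma L2_inner_diff_left:
  "bounded_borel u \<Longrightarrow> bounded_borel v \<Longrightarrow> bounded_borel w \<Longrightarrow>
    L2_inner (\<lambda>t. u t - v t) w = L2_inner u w - L2_inner v w"
  unfolding L2_inner_def by (simp add: left_diff_distrib integrable_inner_bounded_borel)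

lemma L2_inner_diff_right:
  "bounded_borel u \<Longrightarrow> bounded_borel v \<Longrightarrow> bounded_borel w \<Longrightarrow>
    L2_inner w (\<lambda>t. u t - v t) = L2_inner w u - L2_inner w v"
  unfolding L2_inner_def by (simp add: right_diff_distrib integrable_inner_bounded_borel)

lemma L2_norm_sq_scale: "L2_norm_sq (\<lambda>t. a * u t) = (cmod a)\<^sup>2 * L2_norm_sq u"
  unfolding L2_norm_sq_def by (simp add: norm_mult power_mult_distrib)

lemma L2_norm_sq_le:
  assumes "bounded_borel u" "\<And>t. cmod (u t) \<le> B"
  shows "L2_norm_sq u \<le> B\<^sup>2"
proof -
  have "L2_norm_sq u \<le> (LINT t|circle_measure. B\<^sup>2)"
    unfolding L2_norm_sq_def using assms
    by (intro integral_mono integrable_norm_sq_bounded_borel integrable_circle_measure[of _ "B\<^sup>2"])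
       (auto intro: power_mono)
  then show ?thesis
    using prob_space.prob_space[OF prob_space_circle_measure] by simp
qed

lemma L2_norm_sq_add_le:
  assumes "bounded_borel u" "bounded_borel v"
  shows "L2_norm_sq (\<lambda>t. u t + v t) \<le> 2 * L2_norm_sq u + 2 * L2_norm_sq v"
proof -
  have "(cmod (a + b))\<^sup>2 \<le> 2 * (cmod a)\<^sup>2 + 2 * (cmod b)\<^sup>2" for a b :: complex
  proof -
    have "(cmod (a + b))\<^sup>2 \<le> (cmod a + cmod b)\<^sup>2"
      by (simp add: norm_triangle_ineq power_mono)
    also have "\<dots> \<le> 2 * (cmod a)\<^sup>2 + 2 * (cmod b)\<^sup>2"
      using sum_squares_ge_zero[of "cmod a - cmod b" 0] by (simp add: power2_eq_square algebra_simps)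
    finally show ?thesis .
  qed
  then have "L2_norm_sq (\<lambda>t. u t + v t)
      \<le> (LINT t|circle_measure. 2 * (cmod (u t))\<^sup>2 + 2 * (cmod (v t))\<^sup>2)"
    unfolding L2_norm_sq_def
    by (intro integral_mono integrable_norm_sq_bounded_borel bounded_borel_add assms
        Bochner_Integration.integrable_add integrable_mult_right)
  also have "\<dots> = 2 * L2_norm_sq u + 2 * L2_norm_sq v"
    unfolding L2_norm_sq_def using assms by (simp add: integrable_norm_sq_bounded_borel)
  finally show ?thesis .
qed

lemma L2_norm_sq_diff_triangle:
  assumes "bounded_borel u" "bounded_borel v" "bounded_borel w"
  shows "L2_norm_sq (\<lambda>t. u t - w t) \<le> 2 * L2_norm_sq (\<lambda>t. u t - v t) + 2 * L2_norm_sq (\<lambda>t. v t - w t)"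
  using L2_norm_sq_add_le[OF bounded_borel_diff[OF assms(1,2)] bounded_borel_diff[OF assms(2,3)]]
  by simp

text \<open>Cauchy--Schwarz, in the form \<open>(\<integral>|u|)\<^sup>2 \<le> \<integral>|u|\<^sup>2\<close> for a probability measure, i.e.\ nonnegativity
  of the variance of \<open>|u|\<close>.\<close>
lemma norm_L2_inner_sq_le:
  assumes u: "bounded_borel u" and v: "bounded_borel v" and bound: "\<And>t. cmod (v t) \<le> B"
  shows "(cmod (L2_inner u v))\<^sup>2 \<le> B\<^sup>2 * L2_norm_sq u"
proof -
  interpret prob_space circle_measure by (rule prob_space_circle_measure)
  have B: "B \<ge> 0"
    using bound[of 0] norm_ge_zero order_trans by blast
  have int_norm: "integrable circle_measure (\<lambda>t. cmod (u t))"
    using integrable_bounded_borel[OF u] by (rule integrable_norm)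
  have "cmod (L2_inner u v) \<le> (LINT t|circle_measure. cmod (u t * cnj (v t)))"
    unfolding L2_inner_def by (rule integral_norm_bound)
  also have "\<dots> \<le> (LINT t|circle_measure. B * cmod (u t))"
    using bound int_norm
    by (intro integral_mono integrable_norm integrable_inner_bounded_borel u v)
       (auto simp: norm_mult mult.commute[of B] intro: mult_left_mono)
  also have "\<dots> = B * expectation (\<lambda>t. cmod (u t))"
    by simp
  finally have "(cmod (L2_inner u v))\<^sup>2 \<le> (B * expectation (\<lambda>t. cmod (u t)))\<^sup>2"
    by (intro power_mono) auto
  also have "\<dots> \<le> B\<^sup>2 * L2_norm_sq u"
    using variance_positive[of "\<lambda>t. cmod (u t)"] B
      variance_eq[OF int_norm integrable_norm_sq_bounded_borel[OF u]]
    unfolding L2_norm_sq_def power_mult_distrib by (intro mult_left_mono) auto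
  finally show ?thesis .
qed

section \<open>Density of trigonometric polynomials\<close>

definition trig_approximable :: "(real \<Rightarrow> complex) \<Rightarrow> bool" where
  "trig_approximable h \<longleftrightarrow> (\<forall>e>0. \<exists>T. trig_poly T \<and> L2_norm_sq (\<lambda>t. h t - T t) < e)"

lemma trig_approximable_add:
  assumes "bounded_borel u" "bounded_borel v" "trig_approximable u" "trig_approximable v"
  shows "trig_approximable (\<lambda>t. u t + v t)"
  unfolding trig_approximable_def
proof safe
  fix e :: real assume "e > 0"
  then obtain T1 T2 where T: "trig_poly T1" "trig_poly T2"
    and close: "L2_norm_sq (\<lambda>t. u t - T1 t) < e/4" "L2_norm_sq (\<lambda>t. v t - T2 t) < e/4"
    using assms(3,4) unfolding trig_approximable_def by (meson divide_pos_pos zero_less_numeral)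
  have "L2_norm_sq (\<lambda>t. (u t - T1 t) + (v t - T2 t))
      \<le> 2 * L2_norm_sq (\<lambda>t. u t - T1 t) + 2 * L2_norm_sq (\<lambda>t. v t - T2 t)"
    by (intro L2_norm_sq_add_le bounded_borel_diff assms bounded_borel_trig_poly T)
  also have "\<dots> < e"
    using close by simp
  finally have "L2_norm_sq (\<lambda>t. u t + v t - (T1 t + T2 t)) < e"
    by (simp add: algebra_simps)
  then show "\<exists>T. trig_poly T \<and> L2_norm_sq (\<lambda>t. u t + v t - T t) < e"
    using trig_poly_add[OF T] by blast
qed

lemma trig_approximable_scale:
  assumes "trig_approximable u"
  shows "trig_approximable (\<lambda>t. a * u t)"
  unfolding trig_approximable_def
proof safe
  fix e :: real assume "e > 0"
  then have "e / ((cmod a)\<^sup>2 + 1) > 0"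
    by (simp add: add_nonneg_pos)
  then obtain T where T: "trig_poly T" and close: "L2_norm_sq (\<lambda>t. u t - T t) < e / ((cmod a)\<^sup>2 + 1)"
    using assms unfolding trig_approximable_def by blast
  have "L2_norm_sq (\<lambda>t. a * u t - a * T t) = (cmod a)\<^sup>2 * L2_norm_sq (\<lambda>t. u t - T t)"
    using L2_norm_sq_scale[of a "\<lambda>t. u t - T t"] by (simp add: algebra_simps)
  also have "\<dots> \<le> ((cmod a)\<^sup>2 + 1) * L2_norm_sq (\<lambda>t. u t - T t)"
    using L2_norm_sq_nonneg by (intro mult_right_mono) auto
  also have "\<dots> < e"
    using close by (simp add: field_simps add_pos_nonneg)
  finally show "\<exists>T. trig_poly T \<and> L2_norm_sq (\<lambda>t. a * u t - T t) < e"
    using trig_poly_mult[OF trig_poly_const T] by blast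
qed

lemma trig_approximable_sum:
  assumes "finite I" "\<And>i. i \<in> I \<Longrightarrow> bounded_borel (h i)" "\<And>i. i \<in> I \<Longrightarrow> trig_approximable (h i)"
  shows "trig_approximable (\<lambda>t. \<Sum>i\<in>I. h i t)"
  using assms
proof (induction I rule: finite_induct)
  case empty
  then show ?case
    unfolding trig_approximable_def L2_norm_sq_def using trig_poly_const[of 0] by force
next
  case (insert i I)
  then show ?case
    using trig_approximable_add[of "h i" "\<lambda>t. \<Sum>i\<in>I. h i t"] bounded_borel_sum[of I h] by simp
qed

lemma L2_norm_sq_diff_tendsto_zero:
  assumes h: "bounded_borel h" and hs: "\<And>n. bounded_borel (hs n)"
    and bound: "\<And>n t. cmod (hs n t) \<le> B" "\<And>t. cmod (h t) \<le> B"
    and lim: "\<And>t. (\<lambda>n. hs n t) \<longlonglongrightarrow> h t"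
  shows "(\<lambda>n. L2_norm_sq (\<lambda>t. h t - hs n t)) \<longlonglongrightarrow> 0"
proof -
  have [measurable]: "h \<in> borel_measurable borel" "\<And>n. hs n \<in> borel_measurable borel"
    using h hs unfolding bounded_borel_def by auto
  have "(\<lambda>n. LINT t|circle_measure. (cmod (h t - hs n t))\<^sup>2) \<longlonglongrightarrow> (LINT t|circle_measure. 0)"
  proof (rule integral_dominated_convergence[where w = "\<lambda>t. (2*B)\<^sup>2"])
    show "integrable circle_measure (\<lambda>t. (2*B)\<^sup>2)"
      by (rule integrable_circle_measure[of _ "(2*B)\<^sup>2"]) auto
    show "AE t in circle_measure. (\<lambda>n. (cmod (h t - hs n t))\<^sup>2) \<longlonglongrightarrow> 0"
    proof (intro AE_I2)
      fix t
      have "(\<lambda>n. (cmod (h t - hs n t))\<^sup>2) \<longlonglongrightarrow> (cmod (h t - h t))\<^sup>2"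
        by (intro tendsto_power tendsto_norm tendsto_diff tendsto_const lim)
      then show "(\<lambda>n. (cmod (h t - hs n t))\<^sup>2) \<longlonglongrightarrow> 0"
        by simp
    qed
    show "AE t in circle_measure. norm ((cmod (h t - hs n t))\<^sup>2) \<le> (2*B)\<^sup>2" for n
    proof (intro AE_I2)
      fix t
      have "cmod (h t - hs n t) \<le> 2*B"
        using bound(1)[of n t] bound(2)[of t] norm_triangle_ineq4[of "h t" "hs n t"] by linarith
      then have "(cmod (h t - hs n t))\<^sup>2 \<le> (2*B)\<^sup>2"
        by (intro power_mono) auto
      then show "norm ((cmod (h t - hs n t))\<^sup>2) \<le> (2*B)\<^sup>2"
        by simp
    qed
  qed auto
  then show ?thesis
    unfolding L2_norm_sq_def by simp
qed

lemma trig_approximable_limit: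
  assumes h: "bounded_borel h" and hs: "\<And>n. bounded_borel (hs n)" "\<And>n. trig_approximable (hs n)"
    and bound: "\<And>n t. cmod (hs n t) \<le> B" "\<And>t. cmod (h t) \<le> B"
    and lim: "\<And>t. (\<lambda>n. hs n t) \<longlonglongrightarrow> h t"
  shows "trig_approximable h"
  unfolding trig_approximable_def
proof safe
  fix e :: real assume e: "e > 0"
  have "\<forall>\<^sub>F n in sequentially. L2_norm_sq (\<lambda>t. h t - hs n t) < e/4"
    using L2_norm_sq_diff_tendsto_zero[OF h hs(1) bound lim] e by (intro order_tendstoD(2)) auto
  then obtain N where N: "L2_norm_sq (\<lambda>t. h t - hs N t) < e/4"
    by (auto simp: eventually_sequentially)
  obtain T where T: "trig_poly T" "L2_norm_sq (\<lambda>t. hs N t - T t) < e/4"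
    using hs(2)[of N] e unfolding trig_approximable_def by (meson divide_pos_pos zero_less_numeral)
  have "L2_norm_sq (\<lambda>t. h t - T t)
      \<le> 2 * L2_norm_sq (\<lambda>t. h t - hs N t) + 2 * L2_norm_sq (\<lambda>t. hs N t - T t)"
    by (rule L2_norm_sq_diff_triangle[OF h hs(1) bounded_borel_trig_poly[OF T(1)]])
  also have "\<dots> < e"
    using N T by simp
  finally show "\<exists>T. trig_poly T \<and> L2_norm_sq (\<lambda>t. h t - T t) < e"
    using T by blast
qed

lemma bounded_borel_continuous_on_circle:
  fixes \<psi> :: "complex \<Rightarrow> real"
  assumes "continuous_on UNIV \<psi>"
  shows "bounded_borel (\<lambda>t. complex_of_real (\<psi> (cis t)))"
proof -
  have "compact (\<psi> ` sphere 0 1)"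
    using assms by (intro compact_continuous_image continuous_on_subset[OF assms]) auto
  then obtain B where "\<forall>z\<in>sphere 0 1. \<bar>\<psi> z\<bar> \<le> B"
    by (auto dest!: compact_imp_bounded simp: bounded_iff)
  then have "cmod (complex_of_real (\<psi> (cis t))) \<le> B" for t
    by simp
  moreover have "continuous_on UNIV (\<lambda>t. complex_of_real (\<psi> (cis t)))"
    by (intro continuous_intros continuous_on_compose2[OF assms]) auto
  ultimately show ?thesis
    unfolding bounded_borel_def using borel_measurable_continuous_onI by blast
qed

lemma trig_approximable_continuous_on_circle:
  fixes \<psi> :: "complex \<Rightarrow> real"
  assumes "continuous_on UNIV \<psi>"
  shows "trig_approximable (\<lambda>t. complex_of_real (\<psi> (cis t)))"
  unfolding trig_approximable_def
proof safe
  fix e :: real assume "e > 0"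
  define \<eta> where "\<eta> = min 1 (e/2)"
  have \<eta>: "0 < \<eta>" "\<eta>\<^sup>2 < e"
    using \<open>e > 0\<close> by (auto simp: \<eta>_def min_def power2_eq_square mult_le_one
        intro: le_less_trans[of _ "e/2"])
  obtain T where T: "trig_poly T" "\<And>t. cmod (complex_of_real (\<psi> (cis t)) - T t) < \<eta>"
    using uniform_approx_by_trig_poly[OF assms \<eta>(1)] by blast
  have "bounded_borel (\<lambda>t. complex_of_real (\<psi> (cis t)) - T t)"
    by (intro bounded_borel_diff bounded_borel_continuous_on_circle assms bounded_borel_trig_poly T(1))
  then have "L2_norm_sq (\<lambda>t. complex_of_real (\<psi> (cis t)) - T t) \<le> \<eta>\<^sup>2"
    using T(2) by (intro L2_norm_sq_le) (auto intro: less_imp_le)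
  then show "\<exists>T. trig_poly T \<and> L2_norm_sq (\<lambda>t. complex_of_real (\<psi> (cis t)) - T t) < e"
    using T(1) \<eta>(2) by force
qed

lemma cis_eq_cis_imp_eq_on_period:
  assumes "0 < s" "s < 2*pi" "0 \<le> t" "t \<le> 2*pi" "cis s = cis t"
  shows "s = t"
proof -
  have "cis (s - t) = 1"
    using assms(5) cis_divide[of s t] by simp
  then have "cos (s - t) = 1"
    by (simp add: complex_eq_iff)
  then obtain n :: int where n: "s - t = of_int n * (2 * pi)"
    using cos_one_2pi_int by (metis mult.assoc)
  have "(-1) * (2*pi) < of_int n * (2*pi)" "of_int n * (2*pi) < 1 * (2*pi)"
    using assms(1-4) n by linarith+
  then have "-1 < (of_int n :: real)" "of_int n < (1::real)"
    by (simp_all only: mult_less_cancel_right_pos[of "2*pi"] pi_gt_zero zero_less_mult_iff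
        zero_less_numeral simp_thms)
  then have "n = 0"
    by linarith
  then show ?thesis
    using n by simp
qed

lemma compact_open_approx_in_period:
  assumes A: "A \<in> sets borel" and e: "e > 0"
  obtains C V where "compact C" "open V" "C \<subseteq> A \<inter> {0<..<2*pi}" "A \<inter> {0<..<2*pi} \<subseteq> V"
    "V \<subseteq> {0<..<2*pi}" "measure lborel (V - C) < e"
proof -
  define A' where "A' = A \<inter> {0<..<2*pi}"
  have [measurable]: "A' \<in> sets borel"
    unfolding A'_def using A by simp
  obtain U where U: "open U" "A' \<subseteq> U" "emeasure lborel (U - A') < ennreal (e/2)"
    using outer_regular_lborel[of A' "e/2"] e by auto
  obtain W where W: "open W" "- A' \<subseteq> W" "emeasure lborel (W - - A') < ennreal (e/2)"
    using outer_regular_lborel[of "- A'" "e/2"] e by auto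
  define V where "V = U \<inter> {0<..<2*pi}"
  have "compact (- W)"
  proof -
    have "- W \<subseteq> A'" "A' \<subseteq> {0..2*pi}"
      using W(2) unfolding A'_def by auto
    then show ?thesis
      using W(1) by (metis bounded_subset compact_Icc compact_eq_bounded_closed closed_Compl
          compact_imp_bounded order_trans)
  qed
  moreover have "emeasure lborel (V - - W) < ennreal e"
  proof -
    have "emeasure lborel (V - - W) \<le> emeasure lborel ((U - A') \<union> (W - - A'))"
      using U(1) W(1) by (intro emeasure_mono) (auto simp: V_def)
    also have "\<dots> \<le> emeasure lborel (U - A') + emeasure lborel (W - - A')"
      using U(1) W(1) by (intro emeasure_subadditive) auto
    also have "\<dots> < ennreal (e/2) + ennreal (e/2)"
      using U(3) W(3) by (rule add_strict_mono)
    also have "\<dots> = ennreal e"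
      using e by (simp flip: ennreal_plus)
    finally show ?thesis .
  qed
  then have "measure lborel (V - - W) < e"
    unfolding measure_def using e by (subst enn2real_less_iff) (auto intro: order.strict_trans)
  moreover have "open V"
    using U(1) by (auto simp: V_def)
  ultimately show ?thesis
    using that[of "- W" V] U(2) W(2) by (auto simp: A'_def V_def)
qed

text \<open>Urysohn's lemma is applied on the unit circle, so that the resulting function of \<open>t\<close> is a
  continuous function of \<open>e\<^sup>i\<^sup>t\<close>; the points \<open>0\<close> and \<open>2\<pi>\<close>, identified on the circle, are kept
  out of \<open>V\<close>.\<close>
lemma urysohn_on_circle:
  assumes "compact C" "open V" "C \<subseteq> V" "V \<subseteq> {0<..<2*pi}"
  obtains \<psi> :: "complex \<Rightarrow> real" where "continuous_on UNIV \<psi>" "\<And>z. 0 \<le> \<psi> z" "\<And>z. \<psi> z \<le> 1"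
    "\<And>t. t \<in> C \<Longrightarrow> \<psi> (cis t) = 1" "\<And>t. t \<in> {0..2*pi} - V \<Longrightarrow> \<psi> (cis t) = 0"
proof -
  have "compact ({0..2*pi} - V)"
    using assms(2) by (simp add: Diff_eq compact_Int_closed closed_Compl)
  then have closed: "closed (cis ` C)" "closed (cis ` ({0..2*pi} - V))"
    using assms(1) by (auto intro!: compact_imp_closed compact_continuous_image continuous_intros)
  have "cis s \<noteq> cis t" if "s \<in> C" "t \<in> {0..2*pi} - V" for s t
  proof -
    have "s \<in> {0<..<2*pi}"
      using that(1) assms(3,4) by blast
    then show ?thesis
      using that cis_eq_cis_imp_eq_on_period[of s t] assms(3) by auto
  qed
  then have "cis ` C \<inter> cis ` ({0..2*pi} - V) = {}"
    by blast
  then obtain \<psi> :: "complex \<Rightarrow> real" where "continuous_on UNIV \<psi>" "\<And>z. \<psi> z \<in> closed_segment 1 0"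
    "\<And>z. z \<in> cis ` C \<Longrightarrow> \<psi> z = 1" "\<And>z. z \<in> cis ` ({0..2*pi} - V) \<Longrightarrow> \<psi> z = 0"
    using Urysohn[OF closed] by blast
  then show ?thesis
    using that by (auto simp: closed_segment_commute[of 1 0] closed_segment_eq_real_ivl1)
qed

lemma measure_circle_measure:
  assumes "B \<in> sets borel" "B \<subseteq> {0..<2*pi}"
  shows "measure circle_measure B = measure lborel B / (2*pi)"
proof -
  have "{0..<2*pi} \<inter> B = B"
    using assms(2) by auto
  then show ?thesis
    using measure_uniform_measure[of lborel "{0..<2*pi}" B] assms(1) by (simp add: circle_measure_def)
qed

text \<open>The continuous function is \<open>1\<close> on a compact \<open>C\<close> and \<open>0\<close> off an open \<open>V\<close>, where
  \<open>C \<subseteq> A \<subseteq> V\<close> inside the open period and \<open>V - C\<close> has small measure.\<close>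
lemma indicator_approx_continuous_on_circle:
  assumes A [measurable]: "A \<in> sets borel" and e: "e > 0"
  obtains \<psi> :: "complex \<Rightarrow> real" where "continuous_on UNIV \<psi>"
    "L2_norm_sq (\<lambda>t. indicator A t - complex_of_real (\<psi> (cis t))) < e"
proof -
  obtain C V where CV: "compact C" "open V" "C \<subseteq> A \<inter> {0<..<2*pi}" "A \<inter> {0<..<2*pi} \<subseteq> V"
    "V \<subseteq> {0<..<2*pi}" "measure lborel (V - C) < e"
    using compact_open_approx_in_period[OF A e] by auto
  obtain \<psi> :: "complex \<Rightarrow> real" where \<psi>: "continuous_on UNIV \<psi>" "\<And>z. 0 \<le> \<psi> z" "\<And>z. \<psi> z \<le> 1"
    "\<And>t. t \<in> C \<Longrightarrow> \<psi> (cis t) = 1" "\<And>t. t \<in> {0..2*pi} - V \<Longrightarrow> \<psi> (cis t) = 0"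
    using urysohn_on_circle[OF CV(1,2) _ CV(5)] CV(3,4) by (metis inf.boundedE subset_trans)
  define \<phi> where "\<phi> t = complex_of_real (\<psi> (cis t))" for t
  have "bounded_borel \<phi>"
    unfolding \<phi>_def using \<psi>(1) by (rule bounded_borel_continuous_on_circle)
  have [measurable]: "V - C \<in> sets borel"
    using CV(1,2) by (intro sets.Diff borel_open borel_closed compact_imp_closed)
  have pointwise: "(cmod (indicator A t - \<phi> t))\<^sup>2 \<le> indicator (V - C) t" if "t \<in> {0<..<2*pi}" for t
  proof -
    have "indicator A t - \<phi> t = complex_of_real (indicator A t - \<psi> (cis t))"
      by (simp add: \<phi>_def indicator_def)
    moreover have "\<bar>indicator A t - \<psi> (cis t)\<bar> \<le> (1::real)"
      using \<psi>(2,3)[of "cis t"] by (auto simp: indicator_def)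
    ultimately have "cmod (indicator A t - \<phi> t) \<le> 1"
      by (metis norm_of_real)
    then have "(cmod (indicator A t - \<phi> t))\<^sup>2 \<le> 1"
      by (simp add: power_le_one)
    moreover have "indicator A t - \<phi> t = 0" if "t \<notin> V - C"
      using that \<open>t \<in> {0<..<2*pi}\<close> CV(3,4) \<psi>(4,5)[of t] by (auto simp: \<phi>_def indicator_def)
    ultimately show ?thesis
      by (auto simp: indicator_def)
  qed
  have "integrable circle_measure (indicator (V - C) :: real \<Rightarrow> real)"
    by (rule integrable_circle_measure[of _ 1]) (auto simp: indicator_def)
  then have "L2_norm_sq (\<lambda>t. indicator A t - \<phi> t) \<le> (LINT t|circle_measure. indicator (V - C) t)"
    unfolding L2_norm_sq_def
    by (intro integral_mono_AE integrable_norm_sq_bounded_borel bounded_borel_diff \<open>bounded_borel \<phi>\<close>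
        bounded_borel_indicator eventually_mono[OF AE_circle_measure_in_open_period pointwise] A)
  also have "\<dots> = measure circle_measure (V - C)"
    by simp
  also have "\<dots> = measure lborel (V - C) / (2*pi)"
    using CV(5) by (intro measure_circle_measure) auto
  also have "\<dots> \<le> measure lborel (V - C)"
    using divide_left_mono[of 1 "2*pi" "measure lborel (V - C)"] pi_gt3 by simp
  finally have "L2_norm_sq (\<lambda>t. indicator A t - \<phi> t) < e"
    using CV(6) by linarith
  then show ?thesis
    using that[OF \<psi>(1)] unfolding \<phi>_def by blast
qed

lemma trig_approximable_indicator:
  assumes A: "A \<in> sets borel"
  shows "trig_approximable (\<lambda>t. indicator A t)"
  unfolding trig_approximable_def
proof safe
  fix e :: real assume e: "e > 0"
  obtain \<psi> :: "complex \<Rightarrow> real" where \<psi>: "continuous_on UNIV \<psi>"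
    "L2_norm_sq (\<lambda>t. indicator A t - complex_of_real (\<psi> (cis t))) < e/4"
    using indicator_approx_continuous_on_circle[OF A, of "e/4"] e by auto
  define \<phi> where "\<phi> t = complex_of_real (\<psi> (cis t))" for t
  have "bounded_borel \<phi>"
    unfolding \<phi>_def using \<psi>(1) by (rule bounded_borel_continuous_on_circle)
  obtain T where T: "trig_poly T" "L2_norm_sq (\<lambda>t. \<phi> t - T t) < e/4"
    using trig_approximable_continuous_on_circle[OF \<psi>(1)] e
    unfolding trig_approximable_def \<phi>_def by (meson divide_pos_pos zero_less_numeral)
  have "L2_norm_sq (\<lambda>t. indicator A t - T t)
      \<le> 2 * L2_norm_sq (\<lambda>t. indicator A t - \<phi> t) + 2 * L2_norm_sq (\<lambda>t. \<phi> t - T t)"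
    by (intro L2_norm_sq_diff_triangle bounded_borel_indicator \<open>bounded_borel \<phi>\<close>
        bounded_borel_trig_poly T A)
  also have "\<dots> < e"
    using \<psi>(2) T(2) by (simp add: \<phi>_def)
  finally show "\<exists>T. trig_poly T \<and> L2_norm_sq (\<lambda>t. indicator A t - T t) < e"
    using T(1) by blast
qed

text \<open>A bounded Borel function is a bounded pointwise limit of simple functions, which are finite
  combinations of indicators.\<close>
lemma trig_approximable_bounded_borel:
  assumes h: "bounded_borel h"
  shows "trig_approximable h"
proof -
  obtain B where B: "\<And>t. cmod (h t) \<le> B" and [measurable]: "h \<in> borel_measurable borel"
    using h unfolding bounded_borel_def by blast
  obtain F where F: "\<And>i. simple_function borel (F i)" "\<And>t. (\<lambda>i. F i t) \<longlonglongrightarrow> h t"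
    "\<And>i t. dist (F i t) 0 \<le> 2 * dist (h t) 0"
    using borel_measurable_implies_sequence_metric[of h borel 0] by auto
  have F_bound: "cmod (F i t) \<le> 2 * B" for i t
    using F(3)[of i t] B[of t] by simp
  have bounded_F: "bounded_borel (F i)" for i
    unfolding bounded_borel_def using borel_measurable_simple_function[OF F(1)] F_bound by blast
  have approximable_F: "trig_approximable (F i)" for i
  proof -
    have finite: "finite (range (F i))"
      using simple_functionD(1)[OF F(1)[of i]] by simp
    have sets: "F i -` {y} \<in> sets borel" for y
      using simple_functionD(2)[OF F(1)[of i], of "{y}"] by simp
    have simple_sum: "F i = (\<lambda>t. \<Sum>y\<in>range (F i). y * indicator (F i -` {y}) t)"
      using finite by (auto simp: fun_eq_iff indicator_def if_distrib sum.delta cong: if_cong)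
    show ?thesis
      using finite sets
      by (subst simple_sum) (intro trig_approximable_sum bounded_borel_mult bounded_borel_const bounded_borel_indicator
          trig_approximable_scale trig_approximable_indicator)
  qed
  have "cmod (h t) \<le> 2 * B" for t
    using B[of t] norm_ge_zero[of "h t"] by linarith
  then show ?thesis
    using trig_approximable_limit[where hs = F, OF h bounded_F approximable_F F_bound] F(2) by blast
qed

section \<open>Bessel's identity and Parseval's theorem\<close>

lemma L2_inner_trig_sum_right:
  assumes h: "bounded_borel h" and S: "finite S"
  shows "L2_inner h (\<lambda>t. \<Sum>k\<in>S. c k * cis (of_int k * t)) = (\<Sum>k\<in>S. cnj (c k) * fourier_coeff h k)"
proof -
  have [measurable]: "h \<in> borel_measurable borel"
    using h unfolding bounded_borel_def by blast
  have "L2_inner h (\<lambda>t. \<Sum>k\<in>S. c k * cis (of_int k * t))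
      = (LINT t|circle_measure. (\<Sum>k\<in>S. cnj (c k) * (h t * cis (- (of_int k * t)))))"
    unfolding L2_inner_def
    by (intro Bochner_Integration.integral_cong) (auto simp: sum_distrib_left cis_cnj mult_ac)
  also have "\<dots> = (\<Sum>k\<in>S. cnj (c k) * fourier_coeff h k)"
    using h S
    by (subst Bochner_Integration.integral_sum)
       (auto intro!: integrable_bounded_borel bounded_borel_mult bounded_borel_const
         bounded_borel_cis_minus simp: fourier_coeff_circle_measure)
  finally show ?thesis .
qed

lemma L2_inner_trig_sum_left:
  assumes h: "bounded_borel h" and S: "finite S"
  shows "L2_inner (\<lambda>t. \<Sum>k\<in>S. c k * cis (of_int k * t)) h = (\<Sum>k\<in>S. c k * cnj (fourier_coeff h k))"
proof -
  have [measurable]: "h \<in> borel_measurable borel"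
    using h unfolding bounded_borel_def by blast
  have "L2_inner (\<lambda>t. \<Sum>k\<in>S. c k * cis (of_int k * t)) h
      = (LINT t|circle_measure. (\<Sum>k\<in>S. c k * cnj (h t * cis (- (of_int k * t)))))"
    unfolding L2_inner_def
    by (intro Bochner_Integration.integral_cong) (auto simp: sum_distrib_right sum_distrib_left cis_cnj mult_ac)
  also have "\<dots> = (\<Sum>k\<in>S. c k * cnj (fourier_coeff h k))"
    using h S
    by (subst Bochner_Integration.integral_sum)
       (auto intro!: integrable_bounded_borel bounded_borel_mult bounded_borel_const
         bounded_borel_cis_minus bounded_borel_cnj simp: fourier_coeff_circle_measure Bochner_Integration.integral_cnj[symmetric])
  finally show ?thesis .
qed

lemma fourier_coeff_trig_sum:
  assumes "finite S"
  shows "fourier_coeff (\<lambda>t. \<Sum>j\<in>S. c j * cis (of_int j * t)) k = (if k \<in> S then c k else 0)"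
proof -
  have "fourier_coeff (\<lambda>t. \<Sum>j\<in>S. c j * cis (of_int j * t)) k
      = (LINT t|circle_measure. (\<Sum>j\<in>S. c j * cis (of_int (j - k) * t)))"
    using assms unfolding fourier_coeff_circle_measure[OF bounded_borel_trig_sum[THEN
        bounded_borel_def[THEN iffD1], THEN conjunct1, OF assms]]
    by (intro Bochner_Integration.integral_cong)
       (auto simp: sum_distrib_left sum_distrib_right cis_mult algebra_simps)
  also have "\<dots> = (\<Sum>j\<in>S. c j * (LINT t|circle_measure. cis (of_int (j - k) * t)))"
    by (subst Bochner_Integration.integral_sum)
       (auto intro!: integrable_bounded_borel bounded_borel_mult bounded_borel_const bounded_borel_cis
         simp del: of_int_diff)
  also have "\<dots> = (\<Sum>j\<in>S. c j * (if j = k then 1 else 0))"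
    by (simp only: integral_circle_measure_cis right_minus_eq)
  also have "\<dots> = (if k \<in> S then c k else 0)"
    using assms by (simp add: if_distrib sum.delta' cong: if_cong)
  finally show ?thesis .
qed

lemma L2_norm_sq_diff_trig_sum:
  assumes h: "bounded_borel h" and S: "finite S"
  shows "L2_norm_sq (\<lambda>t. h t - (\<Sum>k\<in>S. c k * cis (of_int k * t)))
    = L2_norm_sq h - (\<Sum>k\<in>S. (cmod (fourier_coeff h k))\<^sup>2) + (\<Sum>k\<in>S. (cmod (fourier_coeff h k - c k))\<^sup>2)"
proof -
  define P where "P t = (\<Sum>k\<in>S. c k * cis (of_int k * t))" for t
  have P: "bounded_borel P"
    unfolding P_def using S by (rule bounded_borel_trig_sum)
  have "L2_inner P P = (\<Sum>k\<in>S. c k * cnj (c k))"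
    unfolding P_def using S
    by (simp add: L2_inner_trig_sum_left bounded_borel_trig_sum fourier_coeff_trig_sum)
  moreover have "L2_inner h P = (\<Sum>k\<in>S. cnj (c k) * fourier_coeff h k)"
    "L2_inner P h = (\<Sum>k\<in>S. c k * cnj (fourier_coeff h k))"
    unfolding P_def using h S by (simp_all add: L2_inner_trig_sum_right L2_inner_trig_sum_left)
  moreover have "L2_inner (\<lambda>t. h t - P t) (\<lambda>t. h t - P t)
      = L2_inner h h - L2_inner h P - (L2_inner P h - L2_inner P P)"
    using h P by (simp add: L2_inner_diff_left L2_inner_diff_right bounded_borel_diff)
  ultimately have "complex_of_real (L2_norm_sq (\<lambda>t. h t - P t))
      = complex_of_real (L2_norm_sq h) - (\<Sum>k\<in>S. cnj (c k) * fourier_coeff h k)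
        - (\<Sum>k\<in>S. c k * cnj (fourier_coeff h k)) + (\<Sum>k\<in>S. c k * cnj (c k))"
    unfolding L2_norm_sq_eq_inner by simp
  also have "\<dots> = complex_of_real (L2_norm_sq h - (\<Sum>k\<in>S. (cmod (fourier_coeff h k))\<^sup>2)
      + (\<Sum>k\<in>S. (cmod (fourier_coeff h k - c k))\<^sup>2))"
  proof -
    have "(\<Sum>k\<in>S. (fourier_coeff h k - c k) * cnj (fourier_coeff h k - c k))
        = (\<Sum>k\<in>S. fourier_coeff h k * cnj (fourier_coeff h k)) - (\<Sum>k\<in>S. cnj (c k) * fourier_coeff h k)
          - (\<Sum>k\<in>S. c k * cnj (fourier_coeff h k)) + (\<Sum>k\<in>S. c k * cnj (c k))"
      by (simp add: sum_subtractf sum.distrib[symmetric] algebra_simps)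
    then show ?thesis
      by (simp only: of_real_add of_real_diff of_real_sum complex_norm_square) simp
  qed
  finally show ?thesis
    unfolding P_def of_real_eq_iff .
qed

lemma parseval:
  assumes h: "bounded_borel h"
  shows "((\<lambda>k. (cmod (fourier_coeff h k))\<^sup>2) has_sum L2_norm_sq h) UNIV"
  unfolding has_sum_def
proof (rule tendstoI)
  fix e :: real assume e: "e > 0"
  obtain T where T: "trig_poly T" "L2_norm_sq (\<lambda>t. h t - T t) < e"
    using trig_approximable_bounded_borel[OF h] e unfolding trig_approximable_def by blast
  obtain S0 c where S0: "finite S0" "\<And>t. T t = (\<Sum>k\<in>S0. c k * cis (of_int k * t))"
    using T(1) unfolding trig_poly_def by blast
  have "dist (\<Sum>k\<in>S. (cmod (fourier_coeff h k))\<^sup>2) (L2_norm_sq h) < e"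
    if S: "finite S" "S0 \<subseteq> S" for S
  proof -
    define c' where "c' k = (if k \<in> S0 then c k else 0)" for k
    have "T t = (\<Sum>k\<in>S. c' k * cis (of_int k * t))" for t
    proof -
      have "(\<Sum>k\<in>S. c' k * cis (of_int k * t)) = (\<Sum>k\<in>S. if k \<in> S0 then c k * cis (of_int k * t) else 0)"
        by (rule sum.cong) (simp_all add: c'_def)
      also have "\<dots> = (\<Sum>k\<in>S \<inter> S0. c k * cis (of_int k * t))"
        using S by (simp add: sum.inter_restrict)
      also have "S \<inter> S0 = S0"
        using S by auto
      finally show ?thesis
        using S0(2) by simp
    qed
    then have "L2_norm_sq h - (\<Sum>k\<in>S. (cmod (fourier_coeff h k))\<^sup>2)
        \<le> L2_norm_sq (\<lambda>t. h t - T t)"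
      using L2_norm_sq_diff_trig_sum[OF h S(1), of c'] by (simp add: sum_nonneg)
    moreover have "(\<Sum>k\<in>S. (cmod (fourier_coeff h k))\<^sup>2) \<le> L2_norm_sq h"
      using L2_norm_sq_diff_trig_sum[OF h S(1), of "fourier_coeff h"]
        L2_norm_sq_nonneg[of "\<lambda>t. h t - (\<Sum>k\<in>S. fourier_coeff h k * cis (of_int k * t))"] by simp
    ultimately show ?thesis
      using T(2) by (simp add: dist_real_def)
  qed
  then show "\<forall>\<^sub>F S in finite_subsets_at_top UNIV. dist (\<Sum>k\<in>S. (cmod (fourier_coeff h k))\<^sup>2) (L2_norm_sq h) < e"
    unfolding eventually_finite_subsets_at_top using S0(1) by blast
qed

section \<open>Cross-correlation of periodic functions\<close>

definition cross_correlation :: "(real \<Rightarrow> complex) \<Rightarrow> (real \<Rightarrow> complex) \<Rightarrow> real \<Rightarrow> complex" where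
  "cross_correlation f g u = L2_inner (\<lambda>t. f (t + u)) g"

lemma fourier_coeff_translate:
  assumes f: "bounded_borel f" "\<And>t. f (t + 2*pi) = f t"
  shows "fourier_coeff (\<lambda>t. f (t + u)) k = cis (of_int k * u) * fourier_coeff f k"
proof -
  define H where "H s = f s * cis (- (of_int k * s))" for s
  have "cis (- (of_int k * (t + 2*pi))) = cis (- (of_int k * t))" for t
  proof -
    have "cis (- (of_int k * (t + 2*pi))) = cis (- (of_int k * t)) * cis (2*pi * of_int (-k))"
      by (simp add: cis_mult algebra_simps)
    also have "cis (2*pi * of_int (-k)) = 1"
      by (rule cis_multiple_2pi) simp
    finally show ?thesis
      by simp
  qed
  then have H_periodic: "H (t + 2*pi) = H t" for t
    using f(2) by (simp add: H_def)
  have H: "bounded_borel H"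
    unfolding H_def by (intro bounded_borel_mult f bounded_borel_cis_minus)
  have [measurable]: "f \<in> borel_measurable borel"
    using f(1) unfolding bounded_borel_def by blast
  have "fourier_coeff (\<lambda>t. f (t + u)) k = (LINT t|circle_measure. f (t + u) * cis (- (of_int k * t)))"
    by (rule fourier_coeff_circle_measure) measurable
  also have "\<dots> = (LINT t|circle_measure. cis (of_int k * u) * H (t + u))"
    unfolding H_def by (intro Bochner_Integration.integral_cong) (auto simp: cis_mult algebra_simps)
  also have "\<dots> = cis (of_int k * u) * fourier_coeff f k"
    using integral_circle_measure_translate[OF H H_periodic]
    by (simp add: fourier_coeff_circle_measure H_def)
  finally show ?thesis .
qed

lemma L2_norm_sq_translate:
  assumes f: "bounded_borel f" "\<And>t. f (t + 2*pi) = f t"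
  shows "L2_norm_sq (\<lambda>t. f (t + u)) = L2_norm_sq f"
proof -
  have "complex_of_real (L2_norm_sq (\<lambda>t. f (t + u)))
      = (LINT t|circle_measure. (\<lambda>s. f s * cnj (f s)) (t + u))"
    unfolding L2_norm_sq_eq_inner L2_inner_def by simp
  also have "\<dots> = complex_of_real (L2_norm_sq f)"
    unfolding L2_norm_sq_eq_inner L2_inner_def using f
    by (intro integral_circle_measure_translate bounded_borel_mult bounded_borel_cnj) simp_all
  finally show ?thesis
    by simp
qed

lemma norm_cross_correlation_le:
  assumes "bounded_borel f" "bounded_borel g" "\<And>t. cmod (f t) \<le> A" "\<And>t. cmod (g t) \<le> B"
  shows "cmod (cross_correlation f g u) \<le> A * B"
proof -
  interpret prob_space circle_measure
    by (rule prob_space_circle_measure)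
  show ?thesis
    unfolding cross_correlation_def L2_inner_def using assms
    by (intro norm_integral_le_const integrable_inner_bounded_borel bounded_borel_translate)
       (auto simp: norm_mult intro: mult_mono order_trans[OF norm_ge_zero])
qed

text \<open>The error of the partial sum over \<open>S\<close> is \<open>\<langle>f(\<cdot> + u) - P\<^sub>S, g\<rangle>\<close>, with \<open>P\<^sub>S\<close> the projection of
  \<open>f(\<cdot> + u)\<close> on the frequencies in \<open>S\<close>, whose squared norm is the Bessel defect of \<open>f\<close>
  regardless of \<open>u\<close>.\<close>
lemma cross_correlation_partial_sum_error:
  assumes f: "bounded_borel f" "\<And>t. f (t + 2*pi) = f t"
    and g: "bounded_borel g" "\<And>t. cmod (g t) \<le> B" and S: "finite S"
  shows "(cmod (cross_correlation f g u
            - (\<Sum>k\<in>S. fourier_coeff f k * cnj (fourier_coeff g k) * cis (of_int k * u))))\<^sup>2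
    \<le> B\<^sup>2 * (L2_norm_sq f - (\<Sum>k\<in>S. (cmod (fourier_coeff f k))\<^sup>2))"
proof -
  define fu where "fu = (\<lambda>t. f (t + u))"
  define P where "P t = (\<Sum>k\<in>S. fourier_coeff fu k * cis (of_int k * t))" for t
  have fu: "bounded_borel fu"
    unfolding fu_def by (rule bounded_borel_translate[OF f(1)])
  have P: "bounded_borel P"
    unfolding P_def using S by (rule bounded_borel_trig_sum)
  have coeff_fu: "fourier_coeff fu k = cis (of_int k * u) * fourier_coeff f k" for k
    unfolding fu_def by (rule fourier_coeff_translate[OF f])
  have "L2_inner P g = (\<Sum>k\<in>S. fourier_coeff f k * cnj (fourier_coeff g k) * cis (of_int k * u))"
    unfolding P_def L2_inner_trig_sum_left[OF g(1) S] coeff_fu by (simp add: mult_ac)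
  then have "cross_correlation f g u
      - (\<Sum>k\<in>S. fourier_coeff f k * cnj (fourier_coeff g k) * cis (of_int k * u))
      = L2_inner (\<lambda>t. fu t - P t) g"
    using L2_inner_diff_left[OF fu P g(1)] by (simp add: cross_correlation_def fu_def)
  moreover have "L2_norm_sq (\<lambda>t. fu t - P t) = L2_norm_sq f - (\<Sum>k\<in>S. (cmod (fourier_coeff f k))\<^sup>2)"
  proof -
    have "L2_norm_sq fu = L2_norm_sq f"
      unfolding fu_def by (rule L2_norm_sq_translate[OF f])
    then show ?thesis
      unfolding P_def using L2_norm_sq_diff_trig_sum[OF fu S, of "fourier_coeff fu"]
      by (simp add: coeff_fu norm_mult)
  qed
  ultimately show ?thesis
    using norm_L2_inner_sq_le[OF bounded_borel_diff[OF fu P] g] by simp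
qed

lemma uniform_limit_cross_correlation:
  assumes f: "bounded_borel f" "\<And>t. f (t + 2*pi) = f t" and g: "bounded_borel g"
  shows "uniform_limit UNIV
    (\<lambda>S u. \<Sum>k\<in>S. fourier_coeff f k * cnj (fourier_coeff g k) * cis (of_int k * u))
    (cross_correlation f g) (finite_subsets_at_top UNIV)"
  unfolding uniform_limit_iff
proof safe
  fix e :: real assume e: "e > 0"
  obtain B where B: "\<And>t. cmod (g t) \<le> B"
    using g unfolding bounded_borel_def by blast
  define \<eta> where "\<eta> = e\<^sup>2 / (B\<^sup>2 + 1)"
  have "\<eta> > 0"
    using e by (simp add: \<eta>_def add_nonneg_pos)
  have "B\<^sup>2 * \<eta> = e\<^sup>2 * (B\<^sup>2 / (B\<^sup>2 + 1))"
    by (simp add: \<eta>_def)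
  also have "\<dots> < e\<^sup>2 * 1"
    using e by (intro mult_strict_left_mono) (auto simp: divide_less_eq_1 add_nonneg_pos)
  finally have B_\<eta>: "B\<^sup>2 * \<eta> < e\<^sup>2"
    by simp
  have "\<forall>\<^sub>F S in finite_subsets_at_top UNIV. finite S"
    by (rule eventually_finite_subsets_at_top_weakI)
  moreover have "\<forall>\<^sub>F S in finite_subsets_at_top UNIV.
      dist (\<Sum>k\<in>S. (cmod (fourier_coeff f k))\<^sup>2) (L2_norm_sq f) < \<eta>"
    using parseval[OF f(1)] \<open>\<eta> > 0\<close> unfolding has_sum_def by (rule tendstoD)
  ultimately show "\<forall>\<^sub>F S in finite_subsets_at_top UNIV. \<forall>u\<in>UNIV.
      dist (\<Sum>k\<in>S. fourier_coeff f k * cnj (fourier_coeff g k) * cis (of_int k * u))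
        (cross_correlation f g u) < e"
  proof eventually_elim
    case (elim S)
    have "B\<^sup>2 * (L2_norm_sq f - (\<Sum>k\<in>S. (cmod (fourier_coeff f k))\<^sup>2)) \<le> B\<^sup>2 * \<eta>"
      using elim by (intro mult_left_mono) (auto simp: dist_real_def)
    then have "(cmod (cross_correlation f g u
        - (\<Sum>k\<in>S. fourier_coeff f k * cnj (fourier_coeff g k) * cis (of_int k * u))))\<^sup>2 < e\<^sup>2" for u
      using cross_correlation_partial_sum_error[OF f g B, of S u] elim B_\<eta> by linarith
    then show ?case
      using e by (auto simp: dist_norm norm_minus_commute intro: power_less_imp_less_base[of _ 2])
  qed
qed

section \<open>The expected kernel\<close>

lemma (in prob_space) tendsto_integral_uniform_limit:
  fixes f :: "'i \<Rightarrow> 'a \<Rightarrow> 'b::{banach, second_countable_topology}"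
  assumes lim: "uniform_limit (space M) f l F"
    and integrable: "\<And>n. integrable M (f n)" "integrable M l"
  shows "((\<lambda>n. integral\<^sup>L M (f n)) \<longlongrightarrow> integral\<^sup>L M l) F"
proof (rule tendstoI)
  fix e :: real assume "e > 0"
  then have "e/2 > 0"
    by simp
  then have "\<forall>\<^sub>F n in F. \<forall>x\<in>space M. dist (f n x) (l x) < e/2"
    using lim unfolding uniform_limit_iff by blast
  then show "\<forall>\<^sub>F n in F. dist (integral\<^sup>L M (f n)) (integral\<^sup>L M l) < e"
  proof (rule eventually_mono)
    fix n assume close: "\<forall>x\<in>space M. dist (f n x) (l x) < e/2"
    have "dist (integral\<^sup>L M (f n)) (integral\<^sup>L M l) = norm (LINT x|M. f n x - l x)"
      using integrable by (simp add: dist_norm)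
    also have "\<dots> \<le> e/2"
      using integrable close
      by (intro norm_integral_le_const) (auto simp: dist_norm less_imp_le)
    also have "\<dots> < e"
      using \<open>e > 0\<close> by simp
    finally show "dist (integral\<^sup>L M (f n)) (integral\<^sup>L M l) < e" .
  qed
qed

lemma integral_circle_measure_dither:
  assumes f: "bounded_borel f" "\<And>t. f (t + 2*pi) = f t" and g: "bounded_borel g" "\<And>t. g (t + 2*pi) = g t"
  shows "(LINT \<xi>|circle_measure. f (a + \<xi>) * cnj (g (b + \<xi>))) = cross_correlation f g (a - b)"
proof -
  have f_periodic: "f (t + 2*pi + c) = f (t + c)" for t c
    using f(2)[of "t + c"] by (simp add: add_ac)
  have "(LINT \<xi>|circle_measure. f (a + \<xi>) * cnj (g (b + \<xi>)))
      = (LINT \<xi>|circle_measure. (\<lambda>t. f (t + (a - b)) * cnj (g t)) (\<xi> + b))"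
    by (simp add: algebra_simps)
  also have "\<dots> = cross_correlation f g (a - b)"
    unfolding cross_correlation_def L2_inner_def using f g
    by (intro integral_circle_measure_translate bounded_borel_mult bounded_borel_cnj
        bounded_borel_translate) (simp_all add: f_periodic)
  finally show ?thesis .
qed

text \<open>The \<open>m\<close> summands of \<open>\<langle>z\<^sub>f(x), z\<^sub>g(y)\<rangle>\<close> are identically distributed, each with weight \<open>1/m\<close>.\<close>
lemma expected_kernel_eq_integral_freq_dither:
  fixes \<Lambda> :: "'a::euclidean_space measure" and x y :: 'a
  assumes \<Lambda>: "prob_space \<Lambda>" "sets \<Lambda> = sets borel"
    and f: "bounded_borel f" and g: "bounded_borel g" and m: "m \<ge> 1"
  defines "\<Phi> \<equiv> \<lambda>q. f (fst q \<bullet> x + snd q) * cnj (g (fst q \<bullet> y + snd q))"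
  shows "expected_kernel m \<Lambda> f g x y = (LINT q|freq_dither \<Lambda>. \<Phi> q)"
    and "integrable (freq_dither \<Lambda>) \<Phi>"
proof -
  obtain A B where [measurable]: "f \<in> borel_measurable borel" "g \<in> borel_measurable borel"
    and A: "\<And>t. cmod (f t) \<le> A" and B: "\<And>t. cmod (g t) \<le> B"
    using f g unfolding bounded_borel_def by blast
  let ?P = "PiM {..<m} (\<lambda>_. freq_dither \<Lambda>)"
  have D: "prob_space (freq_dither \<Lambda>)"
    unfolding freq_dither_def using \<Lambda>(1) prob_space_circle_measure[unfolded circle_measure_def]
    by (rule prob_space_pair)
  interpret P: prob_space ?P
    using D by (rule prob_space_PiM)
  have "sets (freq_dither \<Lambda>) = sets (borel \<Otimes>\<^sub>M borel)"
    unfolding freq_dither_def using \<Lambda>(2) by (intro sets_pair_measure_cong) auto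
  then have [measurable]: "\<Phi> \<in> borel_measurable (freq_dither \<Lambda>)"
    unfolding measurable_cong_sets[OF \<open>sets (freq_dither \<Lambda>) = _\<close> refl] \<Phi>_def by measurable
  have \<Phi>_bound: "cmod (\<Phi> q) \<le> A * B" for q
    unfolding \<Phi>_def norm_mult complex_mod_cnj
    using A B by (intro mult_mono) (auto intro: order_trans[OF norm_ge_zero])
  then show \<Phi>: "integrable (freq_dither \<Lambda>) \<Phi>"
    by (intro finite_measure.integrable_const_bound[OF prob_space.finite_measure[OF D], of _ "A * B"])
       auto
  have component: "(LINT p|?P. \<Phi> (p j)) = (LINT q|freq_dither \<Lambda>. \<Phi> q)" if "j < m" for j
  proof -
    have "distr ?P (freq_dither \<Lambda>) (\<lambda>p. p j) = freq_dither \<Lambda>"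
      by (rule distr_PiM_component) (use D that in auto)
    then show ?thesis
      using that integral_distr[of "\<lambda>p. p j" ?P "freq_dither \<Lambda>" \<Phi>]
      by (simp add: measurable_component_singleton)
  qed
  have "expected_kernel m \<Lambda> f g x y = (LINT p|?P. (\<Sum>j<m. \<Phi> (p j))) / of_nat m"
    unfolding expected_kernel_def rpf_def \<Phi>_def
    by (simp add: add.commute sum_divide_distrib[symmetric] flip: of_real_mult)
  also have "\<dots> = (\<Sum>j<m. (LINT p|?P. \<Phi> (p j))) / of_nat m"
    by (subst Bochner_Integration.integral_sum)
       (auto intro!: P.integrable_const_bound[of _ "A * B"] AE_I2 \<Phi>_bound measurable_compose[OF _ \<open>\<Phi> \<in> _\<close>]
         measurable_component_singleton)
  also have "\<dots> = (LINT q|freq_dither \<Lambda>. \<Phi> q)"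
    using m by (simp add: component)
  finally show "expected_kernel m \<Lambda> f g x y = (LINT q|freq_dither \<Lambda>. \<Phi> q)" .
qed

lemma expected_kernel_eq_integral_cross_correlation:
  fixes \<Lambda> :: "'a::euclidean_space measure"
  assumes \<Lambda>: "prob_space \<Lambda>" "sets \<Lambda> = sets borel"
    and f: "bounded_borel f" "\<And>t. f (t + 2*pi) = f t"
    and g: "bounded_borel g" "\<And>t. g (t + 2*pi) = g t" and m: "m \<ge> 1"
  shows "expected_kernel m \<Lambda> f g x y = (LINT \<omega>|\<Lambda>. cross_correlation f g (\<omega> \<bullet> (x - y)))"
    and "integrable \<Lambda> (\<lambda>\<omega>. cross_correlation f g (\<omega> \<bullet> (x - y)))"
proof -
  define \<Phi> where "\<Phi> q = f (fst q \<bullet> x + snd q) * cnj (g (fst q \<bullet> y + snd q))" for q :: "'a \<times> real"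
  note pair = expected_kernel_eq_integral_freq_dither[OF \<Lambda> f(1) g(1) m, of x y, folded \<Phi>_def]
  have "pair_sigma_finite \<Lambda> circle_measure"
    using \<Lambda>(1) prob_space_circle_measure
    by (auto intro!: pair_sigma_finite.intro prob_space_imp_sigma_finite)
  note fubini = pair_sigma_finite.integral_fst'[OF this] pair_sigma_finite.integrable_fst'[OF this]
  have dither: "(LINT \<xi>|circle_measure. \<Phi> (\<omega>, \<xi>)) = cross_correlation f g (\<omega> \<bullet> (x - y))" for \<omega>
    unfolding \<Phi>_def using integral_circle_measure_dither[OF f g] by (simp add: inner_diff_right)
  show "expected_kernel m \<Lambda> f g x y = (LINT \<omega>|\<Lambda>. cross_correlation f g (\<omega> \<bullet> (x - y)))"
    using pair fubini(1)[of \<Phi>] dither by (simp add: freq_dither_def circle_measure_def)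
  show "integrable \<Lambda> (\<lambda>\<omega>. cross_correlation f g (\<omega> \<bullet> (x - y)))"
    using pair fubini(2)[of \<Phi>] dither by (simp add: freq_dither_def circle_measure_def)
qed

lemma (in prob_space) has_sum_integral_uniform_limit:
  fixes h :: "'i \<Rightarrow> 'a \<Rightarrow> 'b::{banach, second_countable_topology}"
  assumes "uniform_limit (space M) (\<lambda>S x. \<Sum>k\<in>S. h k x) l (finite_subsets_at_top A)"
    and "\<And>k. integrable M (h k)" "integrable M l"
  shows "((\<lambda>k. integral\<^sup>L M (h k)) has_sum integral\<^sup>L M l) A"
  using tendsto_integral_uniform_limit[OF assms(1)] assms(2,3)
  by (simp add: has_sum_def Bochner_Integration.integral_sum)

theorem proposition3:
  fixes \<Lambda> :: "'a::euclidean_space measure"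
    and f g :: "real \<Rightarrow> complex" and m :: nat and x y :: 'a
  assumes "prob_space \<Lambda>" and "sets \<Lambda> = sets borel"
    and "f \<in> PF" and "g \<in> PF" and "m \<ge> 1"
  shows "((\<lambda>k::int. fourier_coeff f k * cnj (fourier_coeff g k) * kernel_of \<Lambda> (of_int k *\<^sub>R (x - y)))
            has_sum expected_kernel m \<Lambda> f g x y) UNIV \<and>
           norm (expected_kernel m \<Lambda> f g x y) \<le> 1"
proof
  interpret \<Lambda>: prob_space \<Lambda> by fact
  have f: "bounded_borel f" "\<And>t. f (t + 2*pi) = f t" "\<And>t. cmod (f t) \<le> 1"
    and g: "bounded_borel g" "\<And>t. g (t + 2*pi) = g t" "\<And>t. cmod (g t) \<le> 1"
    using assms(3,4) unfolding PF_def bounded_borel_def by auto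
  note expected = expected_kernel_eq_integral_cross_correlation[OF assms(1,2) f(1,2) g(1,2) assms(5)]
  define a where "a k = fourier_coeff f k * cnj (fourier_coeff g k)" for k
  have "uniform_limit (space \<Lambda>) (\<lambda>S \<omega>. \<Sum>k\<in>S. a k * cis (of_int k * (\<omega> \<bullet> (x - y))))
      (\<lambda>\<omega>. cross_correlation f g (\<omega> \<bullet> (x - y))) (finite_subsets_at_top UNIV)"
    using uniform_limit_cross_correlation[OF f(1,2) g(1)] unfolding uniform_limit_iff a_def
    by (fast elim: eventually_mono)
  moreover have "integrable \<Lambda> (\<lambda>\<omega>. a k * cis (of_int k * (\<omega> \<bullet> (x - y))))" for k
    by (intro \<Lambda>.integrable_const_bound[of _ "cmod (a k)"])
       (auto simp: norm_mult measurable_cong_sets[OF assms(2) refl])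
  ultimately have "((\<lambda>k. LINT \<omega>|\<Lambda>. a k * cis (of_int k * (\<omega> \<bullet> (x - y))))
      has_sum expected_kernel m \<Lambda> f g x y) UNIV"
    unfolding expected(1) using expected(2) by (rule \<Lambda>.has_sum_integral_uniform_limit)
  then show "((\<lambda>k. fourier_coeff f k * cnj (fourier_coeff g k) * kernel_of \<Lambda> (of_int k *\<^sub>R (x - y)))
      has_sum expected_kernel m \<Lambda> f g x y) UNIV"
    by (simp add: a_def kernel_of_def)
  show "norm (expected_kernel m \<Lambda> f g x y) \<le> 1"
    unfolding expected(1) using expected(2) norm_cross_correlation_le[OF f(1) g(1) f(3) g(3)]
    by (intro \<Lambda>.norm_integral_le_const) auto
qed

end
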